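(* Let $k\ge 2$ be an integer such that $\mathbb{Z}_k$ is an integral domain (i.e. $k$ is prime), let $q\in\{1,\dots,k-1\}$, $n\ge 3$ and $i\ge 1$ be integers, and let $\alpha(k)$ be the restricted period of the Fibonacci sequence modulo $k$. Consider the cylindrical Lights Out game on a board with $i$ rows and $n$ columns whose lights have $k$ states, with every light initially in the same state $k-q$. Then the game is one-pass solvable if and only if $i\equiv 0 \pmod{\alpha(k)}$ or $i\equiv -1 \pmod{\alpha(k)}$.
   Context: Fibonacci numbers: $F_0=0$, $F_1=1$, $F_i=F_{i-1}+F_{i-2}$. The restricted period $\alpha(k)$ is the least positive integer $m$ such that $F_m\equiv 0\pmod k$. Cylindrical Lights Out game: a grid of buttons with $i$ rows (numbered $1,\dots,i$ from top to bottom) and $n$ columns, whose left and right sides are identified, so column $1$ and column $n$ are adjacent; rows do not wrap around. Each button has a light whose state is an element of $\mathbb{Z}/k\mathbb{Z}$, state $0$ meaning "off". Pressing a button once adds $1 \pmod k$ to the state of its own light and to the states of the lights orthogonally adjacent to it (above, below, left, right, where they exist, with columns taken cyclically). One-pass chasing: for $r=2,3,\dots,i$ in turn, press each button in row $r$ the number of times in $\{0,\dots,k-1\}$ needed to bring the light directly above it (in row $r-1$) to state $0$. The game is one-pass solvable if after this procedure all lights on the board are in state $0$. *)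

theory Defs
  imports Main "HOL-Number_Theory.Fib" "HOL-Computational_Algebra.Primes"
begin

definition restricted_period :: "nat \<Rightarrow> nat" where
  "restricted_period k = (LEAST m. 0 < m \<and> k dvd fib m)"

text \<open>Board states: rows 1..i, columns 0..n-1 (cyclic), light values in {0..k-1}
  (elements of Z/kZ represented by their least nonnegative residue).\<close>
type_synonym board = "nat \<Rightarrow> nat \<Rightarrow> int"

definition affected :: "nat \<Rightarrow> nat \<Rightarrow> nat \<Rightarrow> nat \<Rightarrow> nat \<Rightarrow> nat \<Rightarrow> bool" where
  "affected i n r c r' c' \<longleftrightarrow>
     (1 \<le> r' \<and> r' \<le> i \<and> c' < n) \<and>
     ((r' = r \<and> c' = c) \<or>
      (c' = c \<and> (r' = r + 1 \<or> r' + 1 = r)) \<or>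
      (r' = r \<and> (c' = (c + 1) mod n \<or> c = (c' + 1) mod n)))"

definition press :: "nat \<Rightarrow> nat \<Rightarrow> nat \<Rightarrow> nat \<Rightarrow> nat \<Rightarrow> board \<Rightarrow> board" where
  "press k i n r c s = (\<lambda>r' c'. if affected i n r c r' c' then (s r' c' + 1) mod int k else s r' c')"

text \<open>Chasing step for button (r,c): press it the number of times in {0..k-1}
  needed to turn the light directly above to state 0.\<close>
definition chase_button :: "nat \<Rightarrow> nat \<Rightarrow> nat \<Rightarrow> nat \<Rightarrow> nat \<Rightarrow> board \<Rightarrow> board" where
  "chase_button k i n r c s = (press k i n r c ^^ nat ((int k - s (r - 1) c) mod int k)) s"

definition chase_row :: "nat \<Rightarrow> nat \<Rightarrow> nat \<Rightarrow> nat \<Rightarrow> board \<Rightarrow> board" where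
  "chase_row k i n r s = fold (chase_button k i n r) [0..<n] s"

definition one_pass :: "nat \<Rightarrow> nat \<Rightarrow> nat \<Rightarrow> board \<Rightarrow> board" where
  "one_pass k i n s = fold (chase_row k i n) [2..<i+1] s"

definition one_pass_solvable :: "nat \<Rightarrow> nat \<Rightarrow> nat \<Rightarrow> board \<Rightarrow> bool" where
  "one_pass_solvable k i n s \<longleftrightarrow>
     (\<forall>r c. 1 \<le> r \<and> r \<le> i \<and> c < n \<longrightarrow> one_pass k i n s r c = 0)"

end

theory Submission
  imports Defs "HOL-Number_Theory.Cong"
begin

(* Chasing a uniform board with all lights in state s keeps every row uniform. If each
   button of row r has been pressed x_r times, clearing row r forces
   x_(r+1) = -(s + x_(r-1) + 3 x_r) mod k, and by Cassini's identity this recurrence with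
   x_0 = x_1 = 0 is solved by x_r = (-1)^(r+1) F_(r-1) F_r s mod k. After the pass all rows but
   the last are dark, and the last one is dark iff x_(i+1) = 0, i.e. iff k divides F_i F_(i+1) s.
   As k is prime and does not divide s = k - q, this says that k divides F_i or F_(i+1), and by
   fib (gcd m m') = gcd (fib m) (fib m') the multiples of k among the F_m are exactly those with
   alpha(k) dividing m. *)

lemma fib_cong_shift_back:
  fixes k :: nat
  assumes "[fib (a + d) = fib (b + d)] (mod k)"
    and "[fib (Suc (a + d)) = fib (Suc (b + d))] (mod k)"
  shows "[fib a = fib b] (mod k)"
  using assms
proof (induction d arbitrary: a b)
  case 0
  then show ?case by simp
next
  case (Suc d)
  have "[fib (Suc (a + d)) + fib (a + d) = fib (Suc (b + d)) + fib (b + d)] (mod k)"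
    using Suc.prems(2) by simp
  then have "[fib (Suc (a + d)) + fib (a + d) = fib (Suc (a + d)) + fib (b + d)] (mod k)"
    using Suc.prems(1) by (metis add_Suc_right cong_add cong_refl cong_sym cong_trans)
  then have "[fib (a + d) = fib (b + d)] (mod k)"
    by (simp add: cong_add_lcancel_nat)
  then show ?case
    using Suc.IH Suc.prems(1) by simp
qed

lemma fib_multiple_exists:
  fixes k :: nat
  assumes "k > 0"
  shows "\<exists>m>0. k dvd fib m"
proof -
  define f where "f m = (fib m mod k, fib (Suc m) mod k)" for m
  have "f ` {0..k * k} \<subseteq> {0..<k} \<times> {0..<k}"
    using assms by (auto simp: f_def)
  then have "card (f ` {0..k * k}) \<le> k * k"
    using card_mono[of "{0..<k} \<times> {0..<k}"] by (simp add: card_cartesian_product)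
  then have "card (f ` {0..k * k}) < card {0..k * k}"
    by simp
  then obtain a b where "a < b" "f a = f b"
    using pigeonhole unfolding inj_on_def by (metis linorder_neqE_nat)
  then have "[fib 0 = fib (b - a)] (mod k)"
    using fib_cong_shift_back[of 0 a "b - a" k] by (simp add: f_def cong_def)
  then have "k dvd fib (b - a)"
    by (metis cong_0_iff cong_sym fib.simps(1))
  with \<open>a < b\<close> show ?thesis
    by (metis zero_less_diff)
qed

lemma dvd_fib_iff_restricted_period_dvd:
  fixes k m :: nat
  assumes "k > 0"
  shows "k dvd fib m \<longleftrightarrow> restricted_period k dvd m"
proof -
  let ?\<alpha> = "restricted_period k"
  have \<alpha>: "?\<alpha> > 0" "k dvd fib ?\<alpha>"
    using LeastI_ex[OF fib_multiple_exists[OF assms]] by (simp_all add: restricted_period_def)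
  have \<alpha>_least: "?\<alpha> \<le> m'" if "m' > 0" "k dvd fib m'" for m'
    unfolding restricted_period_def using that by (simp add: Least_le)
  show ?thesis
  proof
    assume "k dvd fib m"
    show "?\<alpha> dvd m"
    proof (cases "m = 0")
      case False
      have "k dvd fib (gcd m ?\<alpha>)"
        using \<open>k dvd fib m\<close> \<alpha> by (simp add: fib_gcd)
      then have "?\<alpha> \<le> gcd m ?\<alpha>"
        using \<alpha>_least \<alpha>(1) by simp
      then have "gcd m ?\<alpha> = ?\<alpha>"
        using \<alpha>(1) by (simp add: antisym gcd_le2_nat)
      then show ?thesis
        by (metis gcd_dvd1)
    qed simp
  next
    assume "?\<alpha> dvd m"
    then have "fib ?\<alpha> dvd fib m"
      by (metis fib_gcd gcd_nat.absorb1 gcd_dvd2)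
    then show "k dvd fib m"
      using \<alpha>(2) by (rule dvd_trans[rotated])
  qed
qed

definition neighbourhood_sum :: "nat \<Rightarrow> (nat \<Rightarrow> nat \<Rightarrow> int) \<Rightarrow> nat \<Rightarrow> nat \<Rightarrow> int" where
  "neighbourhood_sum n p r c =
     p r c + p (r - 1) c + p (r + 1) c + p r ((c + 1) mod n) + p r ((c + n - 1) mod n)"

text \<open>The board reached from the uniform board with all lights in state \<open>s\<close> by pressing
  each button \<open>(r, c)\<close> exactly \<open>p r c\<close> times (lights off the board are never touched).\<close>
definition pressed_board :: "nat \<Rightarrow> nat \<Rightarrow> nat \<Rightarrow> int \<Rightarrow> (nat \<Rightarrow> nat \<Rightarrow> int) \<Rightarrow> board" where
  "pressed_board k i n s p =
     (\<lambda>r c. if 1 \<le> r \<and> r \<le> i \<and> c < n then (s + neighbourhood_sum n p r c) mod int k else s)"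

definition add_presses :: "(nat \<Rightarrow> nat \<Rightarrow> int) \<Rightarrow> nat \<Rightarrow> nat \<Rightarrow> int \<Rightarrow> nat \<Rightarrow> nat \<Rightarrow> int" where
  "add_presses p r c d = (\<lambda>r' c'. if r' = r \<and> c' = c then p r' c' + d else p r' c')"

lemma add_presses_0 [simp]: "add_presses p r c 0 = p"
  unfolding add_presses_def by (intro ext) simp

lemma add_presses_add [simp]: "add_presses (add_presses p r c d) r c e = add_presses p r c (d + e)"
  unfolding add_presses_def by (intro ext) (simp add: add.assoc)

lemma cyclic_succ_mod: "(c::nat) < n \<Longrightarrow> (c + 1) mod n = (if c + 1 = n then 0 else c + 1)"
  by auto

lemma cyclic_pred_mod: "(c::nat) < n \<Longrightarrow> (c + n - 1) mod n = (if c = 0 then n - 1 else c - 1)"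
proof (cases "c = 0")
  case False
  assume "c < n"
  have "c + n - 1 = (c - 1) + n"
    using False by simp
  then have "(c + n - 1) mod n = (c - 1) mod n"
    by simp
  then show ?thesis
    using False \<open>c < n\<close> by simp
qed simp

lemma cyclic_neighbours:
  fixes n c c' :: nat
  assumes "n \<ge> 3" "c < n" "c' < n"
  shows "(c' + 1) mod n \<noteq> c'" "(c' + n - 1) mod n \<noteq> c'" "(c' + 1) mod n \<noteq> (c' + n - 1) mod n"
    and "(c' + n - 1) mod n = c \<longleftrightarrow> c' = (c + 1) mod n"
  using assms by (simp_all only: cyclic_succ_mod cyclic_pred_mod) auto

lemma neighbourhood_sum_add_presses:
  assumes "n \<ge> 3" "c < n" and on_board: "1 \<le> r' \<and> r' \<le> i \<and> c' < n"
  shows "neighbourhood_sum n (add_presses p r c d) r' c' =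
    neighbourhood_sum n p r' c' + (if affected i n r c r' c' then d else 0)"
proof -
  note cyclic = cyclic_neighbours[OF assms(1,2), of c']
  have "neighbourhood_sum n (add_presses p r c d) r' c' = neighbourhood_sum n p r' c' +
     ((if r' = r \<and> c' = c then d else 0) + (if r' - 1 = r \<and> c' = c then d else 0)
     + (if r' + 1 = r \<and> c' = c then d else 0) + (if r' = r \<and> (c' + 1) mod n = c then d else 0)
     + (if r' = r \<and> (c' + n - 1) mod n = c then d else 0))"
    unfolding neighbourhood_sum_def add_presses_def by simp
  also have "\<dots> = neighbourhood_sum n p r' c' + (if affected i n r c r' c' then d else 0)"
    using cyclic on_board unfolding affected_def by (cases "r' = r"; cases "c' = c"; auto)
  finally show ?thesis .
qed

lemma press_pressed_board:
  assumes "n \<ge> 3" "c < n"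
  shows "press k i n r c (pressed_board k i n s p) = pressed_board k i n s (add_presses p r c 1)"
proof (intro ext)
  fix r' c'
  show "press k i n r c (pressed_board k i n s p) r' c' =
    pressed_board k i n s (add_presses p r c 1) r' c'"
  proof (cases "1 \<le> r' \<and> r' \<le> i \<and> c' < n")
    case True
    then show ?thesis
      using neighbourhood_sum_add_presses[OF assms True, where p = p and r = r and d = 1]
      unfolding press_def pressed_board_def by (auto simp: mod_simps ac_simps)
  next
    case False
    then show ?thesis
      unfolding press_def pressed_board_def affected_def by auto
  qed
qed

lemma funpow_press_pressed_board:
  assumes "n \<ge> 3" "c < n"
  shows "(press k i n r c ^^ m) (pressed_board k i n s p) =
    pressed_board k i n s (add_presses p r c (int m))"
proof (induction m)
  case 0
  then show ?case by simp
next
  case (Suc m)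
  have "(press k i n r c ^^ Suc m) (pressed_board k i n s p) =
    press k i n r c (pressed_board k i n s (add_presses p r c (int m)))"
    using Suc.IH by simp
  also have "\<dots> = pressed_board k i n s (add_presses p r c (int (Suc m)))"
    using press_pressed_board[OF assms] by (simp add: add.commute)
  finally show ?case .
qed

lemma chase_button_pressed_board:
  assumes "n \<ge> 3" "c < n"
  shows "chase_button k i n r c (pressed_board k i n s p) =
    pressed_board k i n s
        (add_presses p r c (nat ((int k - pressed_board k i n s p (r - 1) c) mod int k)))"
  unfolding chase_button_def using funpow_press_pressed_board[OF assms] by simp

lemma pressed_board_cong:
  assumes "n > 0" "\<And>r c. c < n \<Longrightarrow> p r c = p' r c"
  shows "pressed_board k i n s p = pressed_board k i n s p'"
  unfolding pressed_board_def neighbourhood_sum_def using assms by (auto intro!: ext)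

lemma fib_product_identity:
  "int (fib (Suc (Suc (Suc m))) * fib (Suc (Suc m))) + int (fib (Suc m) * fib m) =
    3 * int (fib (Suc (Suc m)) * fib (Suc m)) - (-1) ^ m"
  using fib_Cassini_int[of m] by (simp add: algebra_simps power2_eq_square)

text \<open>The chase presses each button of row \<open>r\<close> this often (see \<open>chase_presses_rec\<close>).\<close>
definition chase_presses :: "nat \<Rightarrow> int \<Rightarrow> nat \<Rightarrow> int" where
  "chase_presses k s r = ((-1) ^ (r + 1) * int (fib (r - 1) * fib r) * s) mod int k"

lemma chase_presses_0_1 [simp]: "chase_presses k s 0 = 0" "chase_presses k s (Suc 0) = 0"
  by (simp_all add: chase_presses_def)

lemma chase_presses_nonneg: "k > 0 \<Longrightarrow> chase_presses k s r \<ge> 0"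
  by (simp add: chase_presses_def)

lemma chase_presses_rec:
  "chase_presses k s (Suc (Suc r)) =
    (- (s + chase_presses k s r + 3 * chase_presses k s (Suc r))) mod int k"
proof -
  define x where "x j = (-1) ^ (j + 1) * int (fib (j - 1) * fib j) * s" for j
  have x_rec: "x (Suc (Suc r)) = - (s + x r + 3 * x (Suc r))"
  proof (cases r)
    case (Suc m)
    then show ?thesis
      using arg_cong[OF fib_product_identity[of m], of "\<lambda>y. (-1) ^ m * s * y"]
      by (simp add: x_def algebra_simps power_add)
  qed (simp add: x_def)
  have "[- (s + x r mod int k + 3 * (x (Suc r) mod int k)) = - (s + x r + 3 * x (Suc r))] (mod int k)"
    by (intro cong_minus_minus_iff[THEN iffD2] cong_add cong_mult cong_refl) (simp_all add: cong_def)
  then show ?thesis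
    unfolding chase_presses_def x_def[symmetric] x_rec by (simp add: cong_def)
qed

text \<open>The presses made by the chase once rows \<open>2, \<dots>, R\<close> and the first \<open>m\<close> buttons of
  row \<open>R + 1\<close> have been processed.\<close>
definition chase_pattern :: "nat \<Rightarrow> int \<Rightarrow> nat \<Rightarrow> nat \<Rightarrow> nat \<Rightarrow> nat \<Rightarrow> int" where
  "chase_pattern k s R m r c = (if r \<le> R \<or> (r = Suc R \<and> c < m) then chase_presses k s r else 0)"

lemma chase_button_chase_pattern:
  assumes "n \<ge> 3" "k > 0" "1 \<le> R" "R \<le> i" "m < n"
  shows "chase_button k i n (Suc R) m (pressed_board k i n s (chase_pattern k s R m)) =
    pressed_board k i n s (chase_pattern k s R (Suc m))"
proof -
  obtain R' where R': "R = Suc R'"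
    using assms(3) by (cases R) auto
  have "pressed_board k i n s (chase_pattern k s R m) R m =
      (s + chase_presses k s R' + 3 * chase_presses k s R) mod int k"
    using assms by (simp add: pressed_board_def neighbourhood_sum_def chase_pattern_def R' ac_simps)
  then have "(int k - pressed_board k i n s (chase_pattern k s R m) R m) mod int k =
      chase_presses k s (Suc R)"
    by (simp add: R' chase_presses_rec mod_simps)
  moreover have "add_presses (chase_pattern k s R m) (Suc R) m (chase_presses k s (Suc R)) =
      chase_pattern k s R (Suc m)"
    unfolding add_presses_def chase_pattern_def by (intro ext) auto
  ultimately show ?thesis
    using chase_button_pressed_board[OF assms(1,5), of k i "Suc R" s "chase_pattern k s R m"]
      chase_presses_nonneg[OF assms(2)] by simp
qed

lemma chase_row_chase_pattern:
  assumes "n \<ge> 3" "k > 0" "1 \<le> R" "R \<le> i"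
  shows "chase_row k i n (Suc R) (pressed_board k i n s (chase_pattern k s R 0)) =
    pressed_board k i n s (chase_pattern k s (Suc R) 0)"
proof -
  have "fold (chase_button k i n (Suc R)) [0..<m] (pressed_board k i n s (chase_pattern k s R 0)) =
      pressed_board k i n s (chase_pattern k s R m)" if "m \<le> n" for m
    using that by (induction m) (simp_all add: chase_button_chase_pattern[OF assms])
  then have "chase_row k i n (Suc R) (pressed_board k i n s (chase_pattern k s R 0)) =
      pressed_board k i n s (chase_pattern k s R n)"
    by (simp add: chase_row_def)
  also have "\<dots> = pressed_board k i n s (chase_pattern k s (Suc R) 0)"
    by (rule pressed_board_cong) (use assms in \<open>auto simp: chase_pattern_def\<close>)
  finally show ?thesis .
qed

lemma one_pass_chase_pattern:
  assumes "n \<ge> 3" "k > 0" "1 \<le> i"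
  shows "one_pass k i n (pressed_board k i n s (chase_pattern k s 1 0)) =
    pressed_board k i n s (chase_pattern k s i 0)"
proof -
  have "fold (chase_row k i n) [2..<Suc R] (pressed_board k i n s (chase_pattern k s 1 0)) =
      pressed_board k i n s (chase_pattern k s R 0)" if "1 \<le> R" "R \<le> i" for R
    using that
  proof (induction R)
    case (Suc R)
    then show ?case
      by (cases "R = 0") (simp_all add: chase_row_chase_pattern[OF assms(1,2)])
  qed simp
  then show ?thesis
    using assms(3) by (simp add: one_pass_def)
qed

lemma chased_board_value:
  assumes "1 \<le> r" "r \<le> i" "c < n"
  shows "pressed_board k i n s (chase_pattern k s i 0) r c =
    (s + chase_presses k s (r - 1) + 3 * chase_presses k s r
       + (if r < i then chase_presses k s (Suc r) else 0)) mod int k"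
  using assms by (simp add: pressed_board_def neighbourhood_sum_def chase_pattern_def algebra_simps)

lemma one_pass_solvable_uniform_iff:
  assumes "n \<ge> 3" "1 \<le> i" "0 \<le> s" "s < int k"
  shows "one_pass_solvable k i n (\<lambda>r c. s) \<longleftrightarrow> chase_presses k s (Suc i) = 0"
proof -
  have "k > 0"
    using assms(3,4) by simp
  have "(\<lambda>r c. s) = pressed_board k i n s (chase_pattern k s 1 0)"
    using assms(3,4)
    by (auto simp: pressed_board_def neighbourhood_sum_def chase_pattern_def le_Suc_eq intro!: ext)
  then have final: "one_pass k i n (\<lambda>r c. s) = pressed_board k i n s (chase_pattern k s i 0)"
    using one_pass_chase_pattern[OF assms(1) \<open>k > 0\<close> assms(2)] by simp
  have inner_rows_clear: "pressed_board k i n s (chase_pattern k s i 0) r c = 0"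
    if r: "1 \<le> r" "r < i" "c < n" for r c
  proof -
    obtain r' where "r = Suc r'"
      using r(1) by (cases r) auto
    then show ?thesis
      using chased_board_value[of r i c n k s] r by (simp add: chase_presses_rec mod_simps)
  qed
  have last_row: "pressed_board k i n s (chase_pattern k s i 0) i c = 0 \<longleftrightarrow>
      chase_presses k s (Suc i) = 0" if c: "c < n" for c
  proof -
    obtain i' where i': "i = Suc i'"
      using assms(2) by (cases i) auto
    define t where "t = s + chase_presses k s i' + 3 * chase_presses k s i"
    have "pressed_board k i n s (chase_pattern k s i 0) i c = t mod int k"
      using chased_board_value[of i i c n k s] c assms(2) by (simp add: i' t_def)
    moreover have "chase_presses k s (Suc i) = (- t) mod int k"
      by (simp add: i' t_def chase_presses_rec)
    ultimately show ?thesis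
      by (metis dvd_eq_mod_eq_0 dvd_minus_iff)
  qed
  show ?thesis
    unfolding one_pass_solvable_def final
  proof
    assume "\<forall>r c. 1 \<le> r \<and> r \<le> i \<and> c < n \<longrightarrow> pressed_board k i n s (chase_pattern k s i 0) r c = 0"
    then show "chase_presses k s (Suc i) = 0"
      using last_row[of 0] assms(1,2) by simp
  next
    assume "chase_presses k s (Suc i) = 0"
    then show "\<forall>r c. 1 \<le> r \<and> r \<le> i \<and> c < n \<longrightarrow> pressed_board k i n s (chase_pattern k s i 0) r c = 0"
      using inner_rows_clear last_row by (metis le_neq_implies_less)
  qed
qed

lemma chase_presses_Suc_eq_0_iff:
  assumes "prime k" "\<not> int k dvd s"
  shows "chase_presses k s (Suc i) = 0 \<longleftrightarrow> k dvd fib i \<or> k dvd fib (Suc i)"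
proof -
  have "chase_presses k s (Suc i) = 0 \<longleftrightarrow> int k dvd int (fib i) * int (fib (Suc i)) * s"
    unfolding chase_presses_def dvd_eq_mod_eq_0[symmetric] by (cases "even i") (simp_all add: ac_simps)
  also have "\<dots> \<longleftrightarrow> int k dvd int (fib i) \<or> int k dvd int (fib (Suc i))"
    using assms by (simp add: prime_dvd_mult_iff)
  finally show ?thesis
    by simp
qed

theorem theorem4:
  fixes k q n i :: nat
  assumes "prime k"
    and "1 \<le> q" and "q \<le> k - 1"
    and "n \<ge> 3" and "i \<ge> 1"
  shows "one_pass_solvable k i n (\<lambda>r c. int k - int q) \<longleftrightarrow>
           (i mod restricted_period k = 0 \<or> (i + 1) mod restricted_period k = 0)"
proof -
  have "k \<ge> 2"
    using assms(1) prime_ge_2_nat by blast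
  then have s: "0 < int k - int q" "int k - int q < int k"
    using assms(2,3) by auto
  then have "\<not> int k dvd int k - int q"
    using zdvd_imp_le by fastforce
  then have "one_pass_solvable k i n (\<lambda>r c. int k - int q) \<longleftrightarrow> k dvd fib i \<or> k dvd fib (Suc i)"
    using one_pass_solvable_uniform_iff[OF assms(4,5)] chase_presses_Suc_eq_0_iff[OF assms(1)] s
    by simp
  also have "\<dots> \<longleftrightarrow> restricted_period k dvd i \<or> restricted_period k dvd Suc i"
    using dvd_fib_iff_restricted_period_dvd \<open>k \<ge> 2\<close> by simp
  finally show ?thesis
    by (simp add: dvd_eq_mod_eq_0)
qed

end
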